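(* Let $\Sigma=\mathbb{Z}_6$ and for $n\in\Sigma$ let $n':=\{n+2,n+3,n+4\}$ (mod 6). Define $n\perp m\iff n\in m'$ and, for $A\subseteq\Sigma$, $A^\perp:=\{m\in\Sigma;\ m\perp a\ \forall a\in A\}$; let $\mathcal{L}:=\{A\subseteq\Sigma; A^{\perp\perp}=A\}$ ordered by inclusion. Then $\perp$ is symmetric, anti-reflexive and separating, $\mathcal{L}$ is an irreducible complete atomistic orthocomplemented lattice (a simple closure space on $\Sigma$) which does not satisfy $\Sigma[x]\cup\Sigma[y]\ne\Sigma$ for all coatoms $x,y$ (e.g. $0'\cup3'=\Sigma$). Moreover, with $R:=(\{0,1,2\}\times\{0,1,2\})\cup(\{3,4,5\}\times\{3,4,5\})$ and $S:=(4'\times\Sigma)\cup(\Sigma\times1')$, one has $R,S\in\Sigma'_\circledast$ (for $\mathcal{L}_1=\mathcal{L}_2=\mathcal{L}$) and $R\subsetneqq S\subsetneqq\Sigma\times\Sigma$; consequently there is no complete atomistic coatomistic lattice $\mathcal{L}_0$ with $\mathcal{F}(\mathcal{L}_0)\cong\mathcal{F}(\mathcal{L})\otimes_C\mathcal{F}(\mathcal{L})$.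
   Context: A relation $\perp$ on $\Sigma$ is separating if for any $p\neq q$ there is $r$ with $p\perp r$ and $q\not\perp r$. For a complete lattice: $\Sigma,\Sigma'$ atoms and coatoms, $\Sigma[a]$ atoms below $a$, $\mathsf{Cl}(\omega)=\{\Sigma[a];a\in\omega\}$. $\Sigma'_\circledast$ is the set of $R\subsetneqq\Sigma_1\times\Sigma_2$ such that for every $(p_1,p_2)$, $\{q_1;(q_1,p_2)\in R\}\in\mathsf{Cl}(\Sigma_1'\cup\{1\})$ and $\{q_2;(p_1,q_2)\in R\}\in\mathsf{Cl}(\Sigma_2'\cup\{1\})$. $\mathbf{Chu}_{2_0}$: objects $(A,r,X)$ with $A,X$ pointed sets and $r:A\times X\to\{0,1\}$ vanishing at base points; arrows $(f,g)$ with pointed $f:A\to B$, $g:Y\to X$ and $s(f(a),y)=r(a,g(y))$; $(A,r,X)^\perp=(X,\check r,A)$; $\mathsf{A}_1\otimes_C\mathsf{A}_2=(A_1\wedge A_2,t,\mathbf{Chu}_{2_0}(\mathsf{A}_1,\mathsf{A}_2^\perp))$ with smash product $A\wedge B=((A\setminus\{0\})\times(B\setminus\{0\}))\cup\{0_\sharp\}$, hom-set pointed by the constant arrow, $t((a_1,a_2),(f,g))=r_1(a_1,g(a_2))$. $\mathcal{F}(\mathcal{L})=(\Sigma\cup\{0\},r,\Sigma'\cup\{1\})$ pointed by $0$ and $1$, $r(p,x)=0\iff p\le x$. *)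

theory Defs
  imports "HOL-Algebra.Complete_Lattice" "HOL-Library.Numeral_Type" "HOL-Library.FuncSet"
begin

definition atoms :: "('a, 'b) gorder_scheme \<Rightarrow> 'a set" where
  "atoms L = {p \<in> carrier L. p \<noteq> \<bottom>\<^bsub>L\<^esub> \<and>
      (\<forall>b\<in>carrier L. b \<sqsubseteq>\<^bsub>L\<^esub> p \<longrightarrow> b = \<bottom>\<^bsub>L\<^esub> \<or> b = p)}"

definition coatoms :: "('a, 'b) gorder_scheme \<Rightarrow> 'a set" where
  "coatoms L = {x \<in> carrier L. x \<noteq> \<top>\<^bsub>L\<^esub> \<and>
      (\<forall>b\<in>carrier L. x \<sqsubseteq>\<^bsub>L\<^esub> b \<longrightarrow> b = \<top>\<^bsub>L\<^esub> \<or> b = x)}"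

definition atoms_below :: "('a, 'b) gorder_scheme \<Rightarrow> 'a \<Rightarrow> 'a set" where
  "atoms_below L a = {p \<in> atoms L. p \<sqsubseteq>\<^bsub>L\<^esub> a}"

definition Cl :: "('a, 'b) gorder_scheme \<Rightarrow> 'a set \<Rightarrow> 'a set set" where
  "Cl L \<omega> = atoms_below L ` \<omega>"

definition atomistic :: "('a, 'b) gorder_scheme \<Rightarrow> bool" where
  "atomistic L \<longleftrightarrow> (\<forall>a\<in>carrier L. a = \<Squnion>\<^bsub>L\<^esub> (atoms_below L a))"

definition coatomistic :: "('a, 'b) gorder_scheme \<Rightarrow> bool" where
  "coatomistic L \<longleftrightarrow>
     (\<forall>a\<in>carrier L. a = \<Sqinter>\<^bsub>L\<^esub> {x \<in> coatoms L. a \<sqsubseteq>\<^bsub>L\<^esub> x})"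

definition orthocomplemented :: "('a, 'b) gorder_scheme \<Rightarrow> bool" where
  "orthocomplemented L \<longleftrightarrow> (\<exists>c. (\<forall>a\<in>carrier L. c a \<in> carrier L) \<and>
      (\<forall>a\<in>carrier L. c (c a) = a) \<and>
      (\<forall>a\<in>carrier L. \<forall>b\<in>carrier L. a \<sqsubseteq>\<^bsub>L\<^esub> b \<longrightarrow> c b \<sqsubseteq>\<^bsub>L\<^esub> c a) \<and>
      (\<forall>a\<in>carrier L. a \<sqinter>\<^bsub>L\<^esub> c a = \<bottom>\<^bsub>L\<^esub> \<and> a \<squnion>\<^bsub>L\<^esub> c a = \<top>\<^bsub>L\<^esub>))"

text \<open>Direct products and order isomorphisms, used to define irreducibility
  (a lattice is irreducible iff it is not isomorphic to a direct product of two
  non-trivial lattices).\<close>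

definition prod_gorder :: "('b, 'e) gorder_scheme \<Rightarrow> ('c, 'f) gorder_scheme \<Rightarrow> ('b \<times> 'c) gorder" where
  "prod_gorder L1 L2 = \<lparr>carrier = carrier L1 \<times> carrier L2, eq = (=),
     le = (\<lambda>(a1, a2) (b1, b2). a1 \<sqsubseteq>\<^bsub>L1\<^esub> b1 \<and> a2 \<sqsubseteq>\<^bsub>L2\<^esub> b2)\<rparr>"

definition order_iso :: "('a, 'e) gorder_scheme \<Rightarrow> ('b, 'f) gorder_scheme \<Rightarrow> ('a \<Rightarrow> 'b) \<Rightarrow> bool" where
  "order_iso L M f \<longleftrightarrow> bij_betw f (carrier L) (carrier M) \<and>
     (\<forall>x\<in>carrier L. \<forall>y\<in>carrier L. x \<sqsubseteq>\<^bsub>L\<^esub> y \<longleftrightarrow> f x \<sqsubseteq>\<^bsub>M\<^esub> f y)"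

definition nontrivial_lattice :: "('a, 'e) gorder_scheme \<Rightarrow> bool" where
  "nontrivial_lattice M \<longleftrightarrow> lattice M \<and> (\<exists>x\<in>carrier M. \<exists>y\<in>carrier M. x \<noteq> y)"

definition decomposes_as :: "('a, 'e) gorder_scheme \<Rightarrow> 'b gorder \<Rightarrow> 'c gorder \<Rightarrow> bool" where
  "decomposes_as L L1 L2 \<longleftrightarrow> nontrivial_lattice L1 \<and> nontrivial_lattice L2 \<and>
     (\<exists>f. order_iso L (prod_gorder L1 L2) f)"

definition sigma_circledast :: "('a, 'e) gorder_scheme \<Rightarrow> ('b, 'f) gorder_scheme \<Rightarrow> ('a \<times> 'b) set set" where
  "sigma_circledast L1 L2 = {R. R \<subset> atoms L1 \<times> atoms L2 \<and>
     (\<forall>p1\<in>atoms L1. \<forall>p2\<in>atoms L2.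
        {q1. (q1, p2) \<in> R} \<in> Cl L1 (coatoms L1 \<union> {\<top>\<^bsub>L1\<^esub>}) \<and>
        {q2. (p1, q2) \<in> R} \<in> Cl L2 (coatoms L2 \<union> {\<top>\<^bsub>L2\<^esub>}))}"

text \<open>An object (A, r, X): A pointed by pt0, X pointed by st0, r valued in bool (True = 1).\<close>
record ('a, 'x) chu =
  pts :: "'a set"
  pt0 :: 'a
  states :: "'x set"
  st0 :: 'x
  rel :: "'a \<Rightarrow> 'x \<Rightarrow> bool"

definition chu_obj :: "('a, 'x) chu \<Rightarrow> bool" where
  "chu_obj A \<longleftrightarrow> pt0 A \<in> pts A \<and> st0 A \<in> states A \<and>
     (\<forall>x\<in>states A. \<not> rel A (pt0 A) x) \<and> (\<forall>a\<in>pts A. \<not> rel A a (st0 A))"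

definition chu_arrow :: "('a, 'x) chu \<Rightarrow> ('b, 'y) chu \<Rightarrow> ('a \<Rightarrow> 'b) \<times> ('y \<Rightarrow> 'x) \<Rightarrow> bool" where
  "chu_arrow A B fg \<longleftrightarrow> (case fg of (f, g) \<Rightarrow>
     f \<in> pts A \<rightarrow>\<^sub>E pts B \<and> f (pt0 A) = pt0 B \<and>
     g \<in> states B \<rightarrow>\<^sub>E states A \<and> g (st0 B) = st0 A \<and>
     (\<forall>a\<in>pts A. \<forall>y\<in>states B. rel B (f a) y = rel A a (g y)))"

definition chu_iso :: "('a, 'x) chu \<Rightarrow> ('b, 'y) chu \<Rightarrow> bool" where
  "chu_iso A B \<longleftrightarrow> (\<exists>f g f' g'. chu_arrow A B (f, g) \<and> chu_arrow B A (f', g') \<and>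
     (\<forall>a\<in>pts A. f' (f a) = a) \<and> (\<forall>b\<in>pts B. f (f' b) = b) \<and>
     (\<forall>x\<in>states A. g (g' x) = x) \<and> (\<forall>y\<in>states B. g' (g y) = y))"

definition chu_perp :: "('a, 'x) chu \<Rightarrow> ('x, 'a) chu" where
  "chu_perp A = \<lparr>pts = states A, pt0 = st0 A, states = pts A, st0 = pt0 A,
     rel = (\<lambda>x a. rel A a x)\<rparr>"

text \<open>Smash product: None is the base point 0_sharp.\<close>
definition smash :: "'a set \<Rightarrow> 'a \<Rightarrow> 'b set \<Rightarrow> 'b \<Rightarrow> ('a \<times> 'b) option set" where
  "smash A a0 B b0 = Some ` ((A - {a0}) \<times> (B - {b0})) \<union> {None}"

definition chu_tensor :: "('a1, 'x1) chu \<Rightarrow> ('a2, 'x2) chu \<Rightarrow>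
    (('a1 \<times> 'a2) option, ('a1 \<Rightarrow> 'x2) \<times> ('a2 \<Rightarrow> 'x1)) chu" where
  "chu_tensor A1 A2 = \<lparr>pts = smash (pts A1) (pt0 A1) (pts A2) (pt0 A2), pt0 = None,
     states = {fg. chu_arrow A1 (chu_perp A2) fg},
     st0 = (\<lambda>a\<in>pts A1. st0 A2, \<lambda>a\<in>pts A2. st0 A1),
     rel = (\<lambda>p fg. case p of None \<Rightarrow> False | Some (a1, a2) \<Rightarrow> rel A1 a1 (snd fg a2))\<rparr>"

definition chu_F :: "('a, 'e) gorder_scheme \<Rightarrow> ('a, 'a) chu" where
  "chu_F L = \<lparr>pts = atoms L \<union> {\<bottom>\<^bsub>L\<^esub>}, pt0 = \<bottom>\<^bsub>L\<^esub>,
     states = coatoms L \<union> {\<top>\<^bsub>L\<^esub>}, st0 = \<top>\<^bsub>L\<^esub>,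
     rel = (\<lambda>p x. \<not> p \<sqsubseteq>\<^bsub>L\<^esub> x)\<rparr>"

definition primeZ6 :: "6 \<Rightarrow> 6 set" where
  "primeZ6 n = {n + 2, n + 3, n + 4}"

definition orthZ6 :: "6 \<Rightarrow> 6 \<Rightarrow> bool" where
  "orthZ6 n m \<longleftrightarrow> n \<in> primeZ6 m"

definition perpZ6 :: "6 set \<Rightarrow> 6 set" where
  "perpZ6 A = {m. \<forall>a\<in>A. orthZ6 m a}"

definition LZ6 :: "6 set gorder" where
  "LZ6 = \<lparr>carrier = {A. perpZ6 (perpZ6 A) = A}, eq = (=), le = (\<subseteq>)\<rparr>"

definition separating :: "'a set \<Rightarrow> ('a \<Rightarrow> 'a \<Rightarrow> bool) \<Rightarrow> bool" where
  "separating S r \<longleftrightarrow> (\<forall>p\<in>S. \<forall>q\<in>S. p \<noteq> q \<longrightarrow> (\<exists>s\<in>S. r p s \<and> \<not> r q s))"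

definition simple_closure_space :: "'a set \<Rightarrow> ('a set \<Rightarrow> 'a set) \<Rightarrow> bool" where
  "simple_closure_space S cl \<longleftrightarrow>
     (\<forall>A. A \<subseteq> S \<longrightarrow> A \<subseteq> cl A \<and> cl A \<subseteq> S \<and> cl (cl A) = cl A) \<and>
     (\<forall>A B. A \<subseteq> B \<and> B \<subseteq> S \<longrightarrow> cl A \<subseteq> cl B) \<and>
     cl {} = {} \<and> (\<forall>p\<in>S. cl {p} = {p})"

definition RZ6 :: "(6 \<times> 6) set" where
  "RZ6 = ({0, 1, 2} \<times> {0, 1, 2}) \<union> ({3, 4, 5} \<times> {3, 4, 5})"

definition SZ6 :: "(6 \<times> 6) set" where
  "SZ6 = (primeZ6 4 \<times> UNIV) \<union> (UNIV \<times> primeZ6 1)"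

text \<open>Points of Z_6 identified with the atoms {p} of LZ6.\<close>
definition atom_pairs :: "(6 \<times> 6) set \<Rightarrow> (6 set \<times> 6 set) set" where
  "atom_pairs R = (\<lambda>(p, q). ({p}, {q})) ` R"

end

theory Submission
  imports Defs
begin

text \<open>
  The closed sets \<open>A = A\<^sup>\<perp>\<^sup>\<perp>\<close> of any symmetric irreflexive relation form a complete
  ortholattice under \<open>A \<mapsto> A\<^sup>\<perp>\<close>; if the relation separates points, singletons are
  closed, so the lattice is atomistic with the points as atoms and their polars as coatoms.

  A decomposition of this lattice as a product \<open>L\<^sub>1 \<times> L\<^sub>2\<close> sorts the points into those
  lying in the first factor, a closed set \<open>Z\<close>, and the rest; the closure of two points on
  different sides contains no third point. On \<open>\<int>\<^sub>6\<close> the closure of \<open>{n, n+2}\<close> contains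
  \<open>n+1\<close>, which forces \<open>Z\<close> to be closed under \<open>n \<mapsto> n+1\<close>, hence trivial.

  For the Chu spaces, call the kernel of a state the set of points it annihilates. In
  \<open>\<F>(L\<^sub>0)\<close> with \<open>L\<^sub>0\<close> atomistic the kernel of a coatom determines it, and distinct coatoms are
  incomparable, so a kernel strictly contained in another one forces the latter to be the
  whole point set. This property is preserved by Chu isomorphisms. On the other hand, every
  \<open>R \<in> \<Sigma>'\<^sub>\<circledast>\<close> gives a state of \<open>\<F>(L\<^sub>1) \<otimes> \<F>(L\<^sub>2)\<close> with kernel \<open>{0} \<union> R\<close>, so a chain
  \<open>R \<subset> S\<close> in \<open>\<Sigma>'\<^sub>\<circledast>\<close> rules out \<open>\<F>(L\<^sub>0) \<cong> \<F>(L\<^sub>1) \<otimes> \<F>(L\<^sub>2)\<close>.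
\<close>

section \<open>Lattices of closed sets of an orthogonality relation\<close>

definition polar :: "('a \<Rightarrow> 'a \<Rightarrow> bool) \<Rightarrow> 'a set \<Rightarrow> 'a set" where
  "polar orth A = {m. \<forall>a\<in>A. orth m a}"

definition polar_lattice :: "('a \<Rightarrow> 'a \<Rightarrow> bool) \<Rightarrow> 'a set gorder" where
  "polar_lattice orth = \<lparr>carrier = {A. polar orth (polar orth A) = A}, eq = (=), le = (\<subseteq>)\<rparr>"

lemma polar_antimono: "A \<subseteq> B \<Longrightarrow> polar orth B \<subseteq> polar orth A"
  by (auto simp: polar_def)

lemma polar_empty [simp]: "polar orth {} = UNIV"
  by (simp add: polar_def)

lemma polar_Un: "polar orth (A \<union> B) = polar orth A \<inter> polar orth B"
  by (auto simp: polar_def)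

lemma polar_lattice_simps [simp]:
  "carrier (polar_lattice orth) = {A. polar orth (polar orth A) = A}"
  "le (polar_lattice orth) = (\<subseteq>)" "eq (polar_lattice orth) = (=)"
  by (simp_all add: polar_lattice_def)

lemma polar_lattice_closed_subset:
  assumes "B \<in> carrier (polar_lattice orth)" "A \<subseteq> B"
  shows "polar orth (polar orth A) \<subseteq> B"
  using polar_antimono[of "polar orth B" "polar orth A" orth, OF polar_antimono[OF assms(2)]] assms(1)
  by simp

lemma partial_order_polar_lattice: "partial_order (polar_lattice orth)"
  by unfold_locales auto

locale orthogonality_space =
  fixes orth :: "'a \<Rightarrow> 'a \<Rightarrow> bool"
  assumes symp: "symp orth" and irreflp: "irreflp orth"
begin

lemma polar_UNIV: "polar orth UNIV = {}"
  using irreflp by (auto simp: polar_def irreflp_def)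

lemma Int_polar_self: "A \<inter> polar orth A = {}"
  using irreflp by (auto simp: polar_def irreflp_def)

lemma subset_polar_polar: "A \<subseteq> polar orth (polar orth A)"
  using symp unfolding polar_def by (blast dest: sympD)

lemma polar_polar_polar: "polar orth (polar orth (polar orth A)) = polar orth A"
  by (meson polar_antimono subset_antisym subset_polar_polar)

lemma polar_in_polar_lattice: "polar orth A \<in> carrier (polar_lattice orth)"
  by (simp add: polar_polar_polar)

lemma empty_in_polar_lattice: "{} \<in> carrier (polar_lattice orth)"
  by (simp add: polar_UNIV)

lemma UNIV_in_polar_lattice: "UNIV \<in> carrier (polar_lattice orth)"
  by (simp add: polar_UNIV)

lemma least_polar_lattice:
  assumes "F \<subseteq> carrier (polar_lattice orth)"
  shows "least (polar_lattice orth) (polar orth (polar orth (\<Union>F))) (Upper (polar_lattice orth) F)"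
proof (rule least_UpperI)
  show "X \<sqsubseteq>\<^bsub>polar_lattice orth\<^esub> polar orth (polar orth (\<Union>F))" if "X \<in> F" for X
    using that subset_polar_polar[of "\<Union>F"] by (simp add: Sup_le_iff)
  show "polar orth (polar orth (\<Union>F)) \<sqsubseteq>\<^bsub>polar_lattice orth\<^esub> B"
    if B: "B \<in> Upper (polar_lattice orth) F" for B
  proof -
    have "B \<in> carrier (polar_lattice orth)"
      using B Upper_closed[of "polar_lattice orth" F] by blast
    moreover have "\<Union>F \<subseteq> B"
      using Upper_memD[OF B _ assms] by auto
    ultimately show ?thesis
      unfolding polar_lattice_simps(2) by (rule polar_lattice_closed_subset)
  qed
qed (fact assms, fact polar_in_polar_lattice)

lemma greatest_polar_lattice:
  assumes "F \<subseteq> carrier (polar_lattice orth)"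
  shows "greatest (polar_lattice orth) (\<Inter>F) (Lower (polar_lattice orth) F)"
proof (rule greatest_LowerI)
  show "\<Inter>F \<sqsubseteq>\<^bsub>polar_lattice orth\<^esub> X" if "X \<in> F" for X
    using that by auto
  show "B \<sqsubseteq>\<^bsub>polar_lattice orth\<^esub> \<Inter>F" if B: "B \<in> Lower (polar_lattice orth) F" for B
    using Lower_memD[OF B _ assms] by auto
  have "polar orth (polar orth (\<Inter>F)) \<subseteq> X" if "X \<in> F" for X
    using that assms by (intro polar_lattice_closed_subset) auto
  then have "polar orth (polar orth (\<Inter>F)) \<subseteq> \<Inter>F"
    by blast
  then show "\<Inter>F \<in> carrier (polar_lattice orth)"
    using subset_polar_polar[of "\<Inter>F"] by simp
qed (fact assms)

lemma complete_lattice_polar_lattice: "complete_lattice (polar_lattice orth)"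
  by (rule partial_order.complete_latticeI[OF partial_order_polar_lattice])
    (blast intro: least_polar_lattice greatest_polar_lattice)+

interpretation L: complete_lattice "polar_lattice orth"
  by (rule complete_lattice_polar_lattice)

lemma Sup_polar_lattice:
  "F \<subseteq> carrier (polar_lattice orth) \<Longrightarrow> \<Squnion>\<^bsub>polar_lattice orth\<^esub> F = polar orth (polar orth (\<Union>F))"
  by (rule L.least_unique[OF L.sup_lub least_polar_lattice])

lemma Inf_polar_lattice:
  "F \<subseteq> carrier (polar_lattice orth) \<Longrightarrow> \<Sqinter>\<^bsub>polar_lattice orth\<^esub> F = \<Inter>F"
  by (rule L.greatest_unique[OF L.inf_glb greatest_polar_lattice])

lemma bottom_polar_lattice: "\<bottom>\<^bsub>polar_lattice orth\<^esub> = {}"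
  using empty_in_polar_lattice by (intro L.least_unique[OF L.bottom_least]) (auto simp: least_def)

lemma top_polar_lattice: "\<top>\<^bsub>polar_lattice orth\<^esub> = UNIV"
  using UNIV_in_polar_lattice by (intro L.greatest_unique[OF L.top_greatest]) (auto simp: greatest_def)

lemma orthocomplemented_polar_lattice: "orthocomplemented (polar_lattice orth)"
  unfolding orthocomplemented_def
proof (intro exI[of _ "polar orth"] conjI ballI impI)
  fix A assume A: "A \<in> carrier (polar_lattice orth)"
  then have pair: "{A, polar orth A} \<subseteq> carrier (polar_lattice orth)"
    by (simp add: polar_polar_polar)
  show "polar orth A \<in> carrier (polar_lattice orth)"
    by (rule polar_in_polar_lattice)
  show "polar orth (polar orth A) = A"
    using A by simp
  show "A \<sqinter>\<^bsub>polar_lattice orth\<^esub> polar orth A = \<bottom>\<^bsub>polar_lattice orth\<^esub>"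
    by (simp add: meet_def Inf_polar_lattice[OF pair] bottom_polar_lattice Int_polar_self)
  have "polar orth (A \<union> polar orth A) = {}"
    using A Int_polar_self[of "polar orth A"] by (simp add: polar_Un)
  then show "A \<squnion>\<^bsub>polar_lattice orth\<^esub> polar orth A = \<top>\<^bsub>polar_lattice orth\<^esub>"
    by (simp add: join_def Sup_polar_lattice[OF pair] top_polar_lattice)
qed (simp add: polar_antimono)

end

locale separating_orthogonality_space = orthogonality_space +
  assumes separating: "separating UNIV orth"
begin

lemma polar_polar_singleton: "polar orth (polar orth {p}) = {p}"
proof -
  have "q = p" if "q \<in> polar orth (polar orth {p})" for q
  proof (rule ccontr)
    assume "q \<noteq> p"
    then obtain s where "orth p s" "\<not> orth q s"
      using separating unfolding separating_def by (metis UNIV_I)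
    then have "s \<in> polar orth {p}"
      using symp by (simp add: polar_def sympD)
    then show False
      using that \<open>\<not> orth q s\<close> by (simp add: polar_def)
  qed
  then show ?thesis
    using subset_polar_polar[of "{p}"] by blast
qed

lemma singleton_in_polar_lattice: "{p} \<in> carrier (polar_lattice orth)"
  by (simp add: polar_polar_singleton)

lemma atoms_polar_lattice: "atoms (polar_lattice orth) = range (\<lambda>p. {p})"
proof (intro equalityI subsetI)
  fix A :: "'a set" assume "A \<in> atoms (polar_lattice orth)"
  then have "A \<noteq> {}"
    and minimal: "\<And>B. B \<in> carrier (polar_lattice orth) \<Longrightarrow> B \<subseteq> A \<Longrightarrow> B = {} \<or> B = A"
    by (auto simp: atoms_def bottom_polar_lattice)
  then obtain p where "p \<in> A"
    by blast
  then have "A = {p}"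
    using minimal[OF singleton_in_polar_lattice, of p] by blast
  then show "A \<in> range (\<lambda>p. {p})"
    by blast
next
  fix A :: "'a set" assume "A \<in> range (\<lambda>p. {p})"
  then show "A \<in> atoms (polar_lattice orth)"
    using singleton_in_polar_lattice
    by (auto simp: atoms_def bottom_polar_lattice subset_singleton_iff)
qed

lemma atoms_below_polar_lattice: "atoms_below (polar_lattice orth) A = (\<lambda>p. {p}) ` A"
  by (auto simp: atoms_below_def atoms_polar_lattice)

lemma atomistic_polar_lattice: "atomistic (polar_lattice orth)"
  unfolding atomistic_def
proof
  fix A assume "A \<in> carrier (polar_lattice orth)"
  moreover have "atoms_below (polar_lattice orth) A \<subseteq> carrier (polar_lattice orth)"
    using singleton_in_polar_lattice by (auto simp: atoms_below_polar_lattice)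
  ultimately show "A = \<Squnion>\<^bsub>polar_lattice orth\<^esub> (atoms_below (polar_lattice orth) A)"
    by (simp add: Sup_polar_lattice atoms_below_polar_lattice)
qed

lemma polar_singleton_ne_UNIV: "polar orth {p} \<noteq> UNIV"
  using Int_polar_self[of "{p}"] by auto

lemma polar_singleton_subset_iff: "polar orth {p} \<subseteq> polar orth {q} \<longleftrightarrow> p = q"
  using polar_antimono[of "polar orth {p}" "polar orth {q}" orth]
  by (auto simp: polar_polar_singleton)

lemma subset_polar_singleton:
  assumes "A \<in> carrier (polar_lattice orth)" "A \<noteq> UNIV"
  obtains p where "A \<subseteq> polar orth {p}"
proof -
  have "polar orth A \<noteq> {}"
    using assms by auto
  then obtain p where "p \<in> polar orth A"
    by blast
  then have "polar orth (polar orth A) \<subseteq> polar orth {p}"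
    by (intro polar_antimono) simp
  with assms(1) show ?thesis
    using that by simp
qed

lemma coatoms_polar_lattice: "coatoms (polar_lattice orth) = range (\<lambda>p. polar orth {p})"
proof (intro equalityI subsetI)
  fix A assume "A \<in> coatoms (polar_lattice orth)"
  then have A: "A \<in> carrier (polar_lattice orth)" "A \<noteq> UNIV"
    and maximal: "\<And>B. B \<in> carrier (polar_lattice orth) \<Longrightarrow> A \<subseteq> B \<Longrightarrow> B = UNIV \<or> B = A"
    by (auto simp: coatoms_def top_polar_lattice)
  obtain p where p: "A \<subseteq> polar orth {p}"
    using subset_polar_singleton[OF A] .
  then have "A = polar orth {p}"
    using maximal[OF polar_in_polar_lattice p] polar_singleton_ne_UNIV[of p] by argo
  then show "A \<in> range (\<lambda>p. polar orth {p})"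
    by blast
next
  fix A assume "A \<in> range (\<lambda>p. polar orth {p})"
  then obtain p where A: "A = polar orth {p}"
    by blast
  have maximal: "B = A" if B: "B \<in> carrier (polar_lattice orth)" "B \<noteq> UNIV" and "A \<subseteq> B" for B
  proof -
    obtain q where q: "B \<subseteq> polar orth {q}"
      using subset_polar_singleton[OF B] .
    have "polar orth {p} \<subseteq> polar orth {q}"
      using subset_trans[OF \<open>A \<subseteq> B\<close> q] A by simp
    then have "q = p"
      by (simp add: polar_singleton_subset_iff)
    with q A \<open>A \<subseteq> B\<close> show "B = A"
      by (intro subset_antisym) simp_all
  qed
  moreover have "A \<in> carrier (polar_lattice orth)" "A \<noteq> UNIV"
    unfolding A by (rule polar_in_polar_lattice, rule polar_singleton_ne_UNIV)
  ultimately show "A \<in> coatoms (polar_lattice orth)"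
    unfolding coatoms_def top_polar_lattice polar_lattice_simps(2) by blast
qed

lemma simple_closure_space_polar_polar: "simple_closure_space UNIV (\<lambda>A. polar orth (polar orth A))"
  by (auto simp: simple_closure_space_def polar_polar_polar subset_polar_polar
      polar_antimono polar_UNIV polar_polar_singleton)

lemma singleton_pairs_in_sigma_circledast:
  assumes "R \<noteq> UNIV"
    and columns: "\<And>q. {p. (p, q) \<in> R} \<in> range (\<lambda>p. polar orth {p}) \<union> {UNIV}"
    and rows: "\<And>p. {q. (p, q) \<in> R} \<in> range (\<lambda>p. polar orth {p}) \<union> {UNIV}"
  shows "(\<lambda>(p, q). ({p}, {q})) ` R \<in> sigma_circledast (polar_lattice orth) (polar_lattice orth)"
proof -
  let ?R = "(\<lambda>(p, q). ({p}, {q})) ` R"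
  let ?Cl = "Cl (polar_lattice orth) (coatoms (polar_lattice orth) \<union> {\<top>\<^bsub>polar_lattice orth\<^esub>})"
  have Cl: "?Cl = (\<lambda>X. (\<lambda>p. {p}) ` X) ` (range (\<lambda>p. polar orth {p}) \<union> {UNIV})"
    by (simp add: Cl_def coatoms_polar_lattice top_polar_lattice atoms_below_polar_lattice)
  obtain p0 q0 where "(p0, q0) \<notin> R"
    using assms(1) by auto
  then have "({p0}, {q0}) \<notin> ?R"
    by auto
  then have "?R \<subset> atoms (polar_lattice orth) \<times> atoms (polar_lattice orth)"
    by (auto simp: atoms_polar_lattice)
  moreover have "{A. (A, {q}) \<in> ?R} \<in> ?Cl" for q
  proof -
    have "{A. (A, {q}) \<in> ?R} = (\<lambda>p. {p}) ` {p. (p, q) \<in> R}"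
      by auto
    then show ?thesis
      unfolding Cl using columns[of q] by blast
  qed
  moreover have "{B. ({p}, B) \<in> ?R} \<in> ?Cl" for p
  proof -
    have "{B. ({p}, B) \<in> ?R} = (\<lambda>q. {q}) ` {q. (p, q) \<in> R}"
      by auto
    then show ?thesis
      unfolding Cl using rows[of p] by blast
  qed
  ultimately show ?thesis
    unfolding sigma_circledast_def atoms_polar_lattice by blast
qed

end

section \<open>Direct decompositions of the lattice of closed sets\<close>

lemma carrier_prod_gorder [simp]: "carrier (prod_gorder L1 L2) = carrier L1 \<times> carrier L2"
  by (simp add: prod_gorder_def)

lemma le_prod_gorder [simp]:
  "x \<sqsubseteq>\<^bsub>prod_gorder L1 L2\<^esub> y \<longleftrightarrow> fst x \<sqsubseteq>\<^bsub>L1\<^esub> fst y \<and> snd x \<sqsubseteq>\<^bsub>L2\<^esub> snd y"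
  by (simp add: prod_gorder_def case_prod_beta)

context separating_orthogonality_space
begin

context
  fixes L1 :: "('b, 'd) gorder_scheme" and L2 :: "('c, 'e) gorder_scheme"
    and f :: "'a set \<Rightarrow> 'b \<times> 'c"
  assumes po1: "partial_order L1" and po2: "partial_order L2"
    and iso: "order_iso (polar_lattice orth) (prod_gorder L1 L2) f"
begin

interpretation L1: partial_order L1 by (rule po1)
interpretation L2: partial_order L2 by (rule po2)

lemma iso_subset_iff:
  assumes "X \<in> carrier (polar_lattice orth)" "Y \<in> carrier (polar_lattice orth)"
  shows "X \<subseteq> Y \<longleftrightarrow> fst (f X) \<sqsubseteq>\<^bsub>L1\<^esub> fst (f Y) \<and> snd (f X) \<sqsubseteq>\<^bsub>L2\<^esub> snd (f Y)"
  using iso assms unfolding order_iso_def by simp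

lemma iso_mem_iff:
  "X \<in> carrier (polar_lattice orth) \<Longrightarrow>
    p \<in> X \<longleftrightarrow> fst (f {p}) \<sqsubseteq>\<^bsub>L1\<^esub> fst (f X) \<and> snd (f {p}) \<sqsubseteq>\<^bsub>L2\<^esub> snd (f X)"
  using iso_subset_iff[OF singleton_in_polar_lattice] by simp

lemma iso_bij: "bij_betw f (carrier (polar_lattice orth)) (carrier L1 \<times> carrier L2)"
  using iso by (simp add: order_iso_def del: polar_lattice_simps)

lemma iso_image: "f ` carrier (polar_lattice orth) = carrier L1 \<times> carrier L2"
  using iso_bij by (simp add: bij_betw_def del: polar_lattice_simps)

lemma iso_closed:
  assumes "X \<in> carrier (polar_lattice orth)"
  shows "fst (f X) \<in> carrier L1" "snd (f X) \<in> carrier L2"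
  using imageI[OF assms, of f] iso_image by (auto simp del: polar_lattice_simps)

lemma iso_surj:
  assumes "a \<in> carrier L1" "b \<in> carrier L2"
  obtains X where "X \<in> carrier (polar_lattice orth)" "f X = (a, b)"
proof -
  have "(a, b) \<in> f ` carrier (polar_lattice orth)"
    using assms iso_image by (simp del: polar_lattice_simps)
  then obtain X where "(a, b) = f X" "X \<in> carrier (polar_lattice orth)"
    by (rule imageE)
  then show ?thesis
    using that[of X] by simp
qed

lemma iso_inj:
  "X \<in> carrier (polar_lattice orth) \<Longrightarrow> Y \<in> carrier (polar_lattice orth) \<Longrightarrow> f X = f Y \<Longrightarrow> X = Y"
  using iso_bij unfolding bij_betw_def by (blast dest: inj_onD)

lemma iso_empty_least:
  shows "a \<in> carrier L1 \<Longrightarrow> fst (f {}) \<sqsubseteq>\<^bsub>L1\<^esub> a"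
    and "b \<in> carrier L2 \<Longrightarrow> snd (f {}) \<sqsubseteq>\<^bsub>L2\<^esub> b"
proof -
  have below_all: "fst (f {}) \<sqsubseteq>\<^bsub>L1\<^esub> fst (f X) \<and> snd (f {}) \<sqsubseteq>\<^bsub>L2\<^esub> snd (f X)"
    if "X \<in> carrier (polar_lattice orth)" for X
    using iso_subset_iff[OF empty_in_polar_lattice that] by simp
  have bottoms: "fst (f {}) \<in> carrier L1" "snd (f {}) \<in> carrier L2"
    by (rule iso_closed[OF empty_in_polar_lattice])+
  show "fst (f {}) \<sqsubseteq>\<^bsub>L1\<^esub> a" if a: "a \<in> carrier L1"
  proof -
    obtain X where "X \<in> carrier (polar_lattice orth)" "f X = (a, snd (f {}))"
      using iso_surj[OF a bottoms(2)] .
    then show ?thesis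
      using below_all[of X] by simp
  qed
  show "snd (f {}) \<sqsubseteq>\<^bsub>L2\<^esub> b" if b: "b \<in> carrier L2"
  proof -
    obtain X where "X \<in> carrier (polar_lattice orth)" "f X = (fst (f {}), b)"
      using iso_surj[OF bottoms(1) b] .
    then show ?thesis
      using below_all[of X] by simp
  qed
qed

lemma iso_below_empty:
  shows "a \<in> carrier L1 \<Longrightarrow> a \<sqsubseteq>\<^bsub>L1\<^esub> fst (f {}) \<Longrightarrow> a = fst (f {})"
    and "b \<in> carrier L2 \<Longrightarrow> b \<sqsubseteq>\<^bsub>L2\<^esub> snd (f {}) \<Longrightarrow> b = snd (f {})"
proof -
  have bottoms: "fst (f {}) \<in> carrier L1" "snd (f {}) \<in> carrier L2"
    by (rule iso_closed[OF empty_in_polar_lattice])+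
  show "a = fst (f {})" if "a \<in> carrier L1" "a \<sqsubseteq>\<^bsub>L1\<^esub> fst (f {})"
    using L1.le_antisym[OF that(2) iso_empty_least(1)[OF that(1)] that(1) bottoms(1)] .
  show "b = snd (f {})" if "b \<in> carrier L2" "b \<sqsubseteq>\<^bsub>L2\<^esub> snd (f {})"
    using L2.le_antisym[OF that(2) iso_empty_least(2)[OF that(1)] that(1) bottoms(2)] .
qed

lemma iso_singleton_in_factor: "fst (f {p}) = fst (f {}) \<or> snd (f {p}) = snd (f {})"
proof -
  have p: "fst (f {p}) \<in> carrier L1" "snd (f {p}) \<in> carrier L2"
    by (rule iso_closed[OF singleton_in_polar_lattice])+
  obtain Y where Y: "Y \<in> carrier (polar_lattice orth)" "f Y = (fst (f {p}), snd (f {}))"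
    using iso_surj[OF p(1) iso_closed(2)[OF empty_in_polar_lattice]] .
  have "Y \<subseteq> {p}"
    using iso_subset_iff[OF Y(1) singleton_in_polar_lattice] Y(2) p iso_empty_least(2)
    by simp
  then consider "Y = {}" | "Y = {p}"
    by blast
  then show ?thesis
  proof cases
    case 1
    then show ?thesis
      using Y(2) by (simp add: prod_eq_iff)
  next
    case 2
    then show ?thesis
      using Y(2) by (simp add: prod_eq_iff)
  qed
qed

lemma iso_singleton_ne_empty: "f {p} \<noteq> f {}"
  using iso_inj[OF singleton_in_polar_lattice empty_in_polar_lattice] by blast

lemma first_factor_closed: "{p. snd (f {p}) = snd (f {})} \<in> carrier (polar_lattice orth)"
proof -
  have top: "fst (f UNIV) \<in> carrier L1"
    by (rule iso_closed[OF UNIV_in_polar_lattice])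
  obtain Y where Y: "Y \<in> carrier (polar_lattice orth)" "f Y = (fst (f UNIV), snd (f {}))"
    using iso_surj[OF top iso_closed(2)[OF empty_in_polar_lattice]] .
  have "p \<in> Y \<longleftrightarrow> snd (f {p}) = snd (f {})" for p
  proof -
    have "fst (f {p}) \<sqsubseteq>\<^bsub>L1\<^esub> fst (f UNIV)"
      using iso_mem_iff[OF UNIV_in_polar_lattice, of p] by simp
    then have "p \<in> Y \<longleftrightarrow> snd (f {p}) \<sqsubseteq>\<^bsub>L2\<^esub> snd (f {})"
      using iso_mem_iff[OF Y(1), of p] Y(2) by simp
    also have "\<dots> \<longleftrightarrow> snd (f {p}) = snd (f {})"
      using iso_below_empty(2) L2.le_refl iso_closed(2)[OF singleton_in_polar_lattice, of p]
      by metis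
    finally show ?thesis .
  qed
  then have "Y = {p. snd (f {p}) = snd (f {})}"
    by blast
  with Y(1) show ?thesis
    by simp
qed

lemma first_factor_nonempty:
  assumes "a \<in> carrier L1" "a \<noteq> fst (f {})"
  obtains p where "snd (f {p}) = snd (f {})"
proof -
  obtain X where X: "X \<in> carrier (polar_lattice orth)" "f X = (a, snd (f {}))"
    using iso_surj[OF assms(1) iso_closed(2)[OF empty_in_polar_lattice]] .
  have "fst (f X) \<noteq> fst (f {})"
    using X(2) assms(2) by simp
  then have "X \<noteq> {}"
    by auto
  then obtain p where "p \<in> X"
    by blast
  then have "snd (f {p}) \<sqsubseteq>\<^bsub>L2\<^esub> snd (f {})"
    using iso_mem_iff[OF X(1)] X(2) by simp
  then show ?thesis
    using that iso_below_empty(2) iso_closed(2)[OF singleton_in_polar_lattice] by blast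
qed

lemma second_factor_nonempty:
  assumes "b \<in> carrier L2" "b \<noteq> snd (f {})"
  obtains p where "snd (f {p}) \<noteq> snd (f {})"
proof -
  obtain X where X: "X \<in> carrier (polar_lattice orth)" "f X = (fst (f {}), b)"
    using iso_surj[OF iso_closed(1)[OF empty_in_polar_lattice] assms(1)] .
  have "snd (f X) \<noteq> snd (f {})"
    using X(2) assms(2) by simp
  then have "X \<noteq> {}"
    by auto
  then obtain p where "p \<in> X"
    by blast
  then have "fst (f {p}) \<sqsubseteq>\<^bsub>L1\<^esub> fst (f {})"
    using iso_mem_iff[OF X(1)] X(2) by simp
  then have "fst (f {p}) = fst (f {})"
    using iso_below_empty(1) iso_closed(1)[OF singleton_in_polar_lattice] by blast
  then have "snd (f {p}) \<noteq> snd (f {})"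
    using iso_singleton_ne_empty[of p] by (simp add: prod_eq_iff)
  then show ?thesis
    by (rule that)
qed

lemma polar_polar_pair_across_factors:
  assumes p: "snd (f {p}) = snd (f {})" and q: "snd (f {q}) \<noteq> snd (f {})"
  shows "polar orth (polar orth {p, q}) \<subseteq> {p, q}"
proof -
  have q': "fst (f {q}) = fst (f {})"
    using iso_singleton_in_factor[of q] q by simp
  have closed: "fst (f {x}) \<in> carrier L1" "snd (f {x}) \<in> carrier L2" for x
    by (rule iso_closed[OF singleton_in_polar_lattice])+
  obtain X where X: "X \<in> carrier (polar_lattice orth)" "f X = (fst (f {p}), snd (f {q}))"
    using iso_surj[OF closed(1) closed(2)] .
  have "p \<in> X" "q \<in> X"
    using iso_mem_iff[OF X(1)] X(2) p q' closed L1.le_refl L2.le_refl iso_empty_least by simp_all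
  then have "polar orth (polar orth {p, q}) \<subseteq> X"
    by (intro polar_lattice_closed_subset[OF X(1)]) simp
  moreover have "s = p \<or> s = q" if "s \<in> X" for s
  proof -
    have s: "fst (f {s}) \<sqsubseteq>\<^bsub>L1\<^esub> fst (f {p})" "snd (f {s}) \<sqsubseteq>\<^bsub>L2\<^esub> snd (f {q})"
      using iso_mem_iff[OF X(1)] X(2) that by simp_all
    from iso_singleton_in_factor[of s] show ?thesis
    proof
      assume "fst (f {s}) = fst (f {})"
      then have "s \<in> {q}"
        using iso_mem_iff[OF singleton_in_polar_lattice] s(2) q' closed L1.le_refl
          iso_closed(1)[OF empty_in_polar_lattice] by simp
      then show ?thesis
        by simp
    next
      assume "snd (f {s}) = snd (f {})"
      then have "s \<in> {p}"
        using iso_mem_iff[OF singleton_in_polar_lattice] s(1) p closed L2.le_refl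
          iso_closed(2)[OF empty_in_polar_lattice] by simp
      then show ?thesis
        by simp
    qed
  qed
  ultimately show ?thesis
    by blast
qed

end

lemma decomposes_as_polar_lattice_splits_points:
  assumes "decomposes_as (polar_lattice orth) L1 L2"
  obtains Z where "Z \<in> carrier (polar_lattice orth)" "Z \<noteq> {}" "Z \<noteq> UNIV"
    "\<And>p q. p \<in> Z \<Longrightarrow> q \<notin> Z \<Longrightarrow> polar orth (polar orth {p, q}) \<subseteq> {p, q}"
proof -
  obtain f where nt1: "nontrivial_lattice L1" and nt2: "nontrivial_lattice L2"
    and iso: "order_iso (polar_lattice orth) (prod_gorder L1 L2) f"
    using assms unfolding decomposes_as_def by blast
  have po: "partial_order L1" "partial_order L2"
    using nt1 nt2 by (simp_all add: nontrivial_lattice_def lattice_def upper_semilattice_def)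
  have "\<exists>a\<in>carrier L1. a \<noteq> fst (f {})" "\<exists>b\<in>carrier L2. b \<noteq> snd (f {})"
    using nt1 nt2 unfolding nontrivial_lattice_def by metis+
  then obtain a b where a: "a \<in> carrier L1" "a \<noteq> fst (f {})"
    and b: "b \<in> carrier L2" "b \<noteq> snd (f {})"
    by blast
  let ?Z = "{p. snd (f {p}) = snd (f {})}"
  show ?thesis
  proof (rule that)
    show "?Z \<in> carrier (polar_lattice orth)"
      by (rule first_factor_closed[OF po iso])
    show "?Z \<noteq> {}"
      using first_factor_nonempty[OF po iso a] by blast
    show "?Z \<noteq> UNIV"
      using second_factor_nonempty[OF po iso b] by blast
    show "polar orth (polar orth {p, q}) \<subseteq> {p, q}" if "p \<in> ?Z" "q \<notin> ?Z" for p q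
      using polar_polar_pair_across_factors[OF po iso] that by simp
  qed
qed

end

section \<open>Kernels of states of Chu spaces\<close>

definition chu_kernel :: "('a, 'x) chu \<Rightarrow> 'x \<Rightarrow> 'a set" where
  "chu_kernel A x = {a \<in> pts A. \<not> rel A a x}"

definition flat_kernels :: "('a, 'x) chu \<Rightarrow> bool" where
  "flat_kernels A \<longleftrightarrow> (\<forall>x\<in>states A. \<forall>y\<in>states A.
     chu_kernel A x \<subset> chu_kernel A y \<longrightarrow> chu_kernel A y = pts A)"

lemma chu_arrow_kernel:
  assumes "chu_arrow A B (f, g)" "y \<in> states B"
  shows "chu_kernel A (g y) = {a \<in> pts A. f a \<in> chu_kernel B y}"
  using assms by (auto simp: chu_arrow_def chu_kernel_def PiE_iff)

lemma chu_iso_flat_kernels: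
  assumes iso: "chu_iso A B" and flat: "flat_kernels A"
  shows "flat_kernels B"
  unfolding flat_kernels_def
proof (intro ballI impI)
  obtain f g f' g' where fg: "chu_arrow A B (f, g)" and f'g': "chu_arrow B A (f', g')"
    and f_f': "\<And>b. b \<in> pts B \<Longrightarrow> f (f' b) = b"
    using iso unfolding chu_iso_def by blast
  have f': "f' b \<in> pts A" if "b \<in> pts B" for b
    using f'g' that by (auto simp: chu_arrow_def)
  have g: "g y \<in> states A" if "y \<in> states B" for y
    using fg that by (auto simp: chu_arrow_def)
  fix s t assume s: "s \<in> states B" and t: "t \<in> states B"
    and st: "chu_kernel B s \<subset> chu_kernel B t"
  have "chu_kernel A (g s) \<subset> chu_kernel A (g t)"
  proof -
    obtain b where b: "b \<in> chu_kernel B t" "b \<notin> chu_kernel B s"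
      using st by blast
    moreover have "b \<in> pts B"
      using b(1) by (simp add: chu_kernel_def)
    ultimately have "f' b \<in> chu_kernel A (g t) - chu_kernel A (g s)"
      using f' f_f' by (simp add: chu_arrow_kernel[OF fg s] chu_arrow_kernel[OF fg t])
    then show ?thesis
      using st by (auto simp: chu_arrow_kernel[OF fg s] chu_arrow_kernel[OF fg t])
  qed
  then have "chu_kernel A (g t) = pts A"
    using flat g[OF s] g[OF t] unfolding flat_kernels_def by blast
  have "b \<in> chu_kernel B t" if "b \<in> pts B" for b
  proof -
    have "f' b \<in> chu_kernel A (g t)"
      using \<open>chu_kernel A (g t) = pts A\<close> f'[OF that] by blast
    then have "f (f' b) \<in> chu_kernel B t"
      by (simp add: chu_arrow_kernel[OF fg t])
    then show ?thesis
      by (simp add: f_f'[OF that])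
  qed
  then show "chu_kernel B t = pts B"
    by (auto simp: chu_kernel_def)
qed

lemma atomistic_le_of_atoms_below_subset:
  assumes "complete_lattice L" "atomistic L" "x \<in> carrier L" "y \<in> carrier L"
    and "atoms_below L x \<subseteq> atoms_below L y"
  shows "x \<sqsubseteq>\<^bsub>L\<^esub> y"
proof -
  interpret L: complete_lattice L by (rule assms(1))
  have "atoms_below L x \<subseteq> carrier L"
    by (auto simp: atoms_below_def atoms_def)
  then have "\<Squnion>\<^bsub>L\<^esub> (atoms_below L x) \<sqsubseteq>\<^bsub>L\<^esub> y"
    using assms(4)
  proof (rule L.sup_least)
    show "a \<sqsubseteq>\<^bsub>L\<^esub> y" if "a \<in> atoms_below L x" for a
      using that assms(5) by (auto simp: atoms_below_def)
  qed
  then show ?thesis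
    using assms(2,3) unfolding atomistic_def by simp
qed

lemma chu_kernel_chu_F: "chu_kernel (chu_F L) x = {a \<in> atoms L \<union> {\<bottom>\<^bsub>L\<^esub>}. a \<sqsubseteq>\<^bsub>L\<^esub> x}"
  by (simp add: chu_kernel_def chu_F_def)

lemma chu_F_subset_carrier:
  assumes "complete_lattice L"
  shows "pts (chu_F L) \<subseteq> carrier L" "states (chu_F L) \<subseteq> carrier L"
proof -
  interpret L: complete_lattice L by (rule assms)
  show "pts (chu_F L) \<subseteq> carrier L" "states (chu_F L) \<subseteq> carrier L"
    by (auto simp: chu_F_def atoms_def coatoms_def)
qed

lemma flat_kernels_chu_F:
  assumes "complete_lattice L" "atomistic L"
  shows "flat_kernels (chu_F L)"
  unfolding flat_kernels_def
proof (intro ballI impI)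
  interpret L: complete_lattice L by (rule assms(1))
  note pts = chu_F_subset_carrier(1)[OF assms(1)]
  have states: "states (chu_F L) = coatoms L \<union> {\<top>\<^bsub>L\<^esub>}"
    by (simp add: chu_F_def)
  have kernel_top: "chu_kernel (chu_F L) \<top>\<^bsub>L\<^esub> = pts (chu_F L)"
    using pts by (auto simp: chu_kernel_def chu_F_def)
  fix x y assume x: "x \<in> states (chu_F L)" and y: "y \<in> states (chu_F L)"
    and xy: "chu_kernel (chu_F L) x \<subset> chu_kernel (chu_F L) y"
  show "chu_kernel (chu_F L) y = pts (chu_F L)"
  proof (rule ccontr)
    assume "chu_kernel (chu_F L) y \<noteq> pts (chu_F L)"
    then have "y \<noteq> \<top>\<^bsub>L\<^esub>"
      using kernel_top by auto
    then have y_coatom: "y \<in> coatoms L"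
      using y states by simp
    have "chu_kernel (chu_F L) x \<noteq> pts (chu_F L)"
      using xy by (auto simp: chu_kernel_def)
    then have "x \<noteq> \<top>\<^bsub>L\<^esub>"
      using kernel_top by auto
    then have x_coatom: "x \<in> coatoms L"
      using x states by simp
    have "atoms_below L x \<subseteq> atoms_below L y"
      using xy by (auto simp: chu_kernel_chu_F atoms_below_def)
    then have "x \<sqsubseteq>\<^bsub>L\<^esub> y"
      using x_coatom y_coatom assms
      by (intro atomistic_le_of_atoms_below_subset) (auto simp: coatoms_def)
    then have "y = x"
      using x_coatom y_coatom \<open>y \<noteq> \<top>\<^bsub>L\<^esub>\<close> by (auto simp: coatoms_def)
    then show False
      using xy by simp
  qed
qed

definition coatom_with_atoms :: "('a, 'e) gorder_scheme \<Rightarrow> 'a set \<Rightarrow> 'a" where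
  "coatom_with_atoms L A = inv_into (coatoms L \<union> {\<top>\<^bsub>L\<^esub>}) (atoms_below L) A"

lemma coatom_with_atoms:
  assumes "A \<in> Cl L (coatoms L \<union> {\<top>\<^bsub>L\<^esub>})"
  shows "coatom_with_atoms L A \<in> coatoms L \<union> {\<top>\<^bsub>L\<^esub>}"
    and "atoms_below L (coatom_with_atoms L A) = A"
  using inv_into_into[OF assms[unfolded Cl_def]] f_inv_into_f[OF assms[unfolded Cl_def]]
  unfolding coatom_with_atoms_def by this+

definition circledast_state ::
    "('a, 'e) gorder_scheme \<Rightarrow> ('b, 'f) gorder_scheme \<Rightarrow> ('a \<times> 'b) set \<Rightarrow> ('a \<Rightarrow> 'b) \<times> ('b \<Rightarrow> 'a)" where
  "circledast_state L1 L2 R =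
    (\<lambda>a\<in>pts (chu_F L1). if a = \<bottom>\<^bsub>L1\<^esub> then \<top>\<^bsub>L2\<^esub> else coatom_with_atoms L2 {b. (a, b) \<in> R},
     \<lambda>b\<in>pts (chu_F L2). if b = \<bottom>\<^bsub>L2\<^esub> then \<top>\<^bsub>L1\<^esub> else coatom_with_atoms L1 {a. (a, b) \<in> R})"

context
  fixes L1 :: "('a, 'e) gorder_scheme" and L2 :: "('b, 'f) gorder_scheme" and R :: "('a \<times> 'b) set"
  assumes L1: "complete_lattice L1" and L2: "complete_lattice L2"
    and R: "R \<in> sigma_circledast L1 L2"
begin

interpretation L1: complete_lattice L1 by (rule L1)
interpretation L2: complete_lattice L2 by (rule L2)

lemma circledast_state_fst:
  assumes "a \<in> pts (chu_F L1)"
  shows "fst (circledast_state L1 L2 R) a \<in> states (chu_F L2)"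
    and "a \<noteq> \<bottom>\<^bsub>L1\<^esub> \<Longrightarrow> atoms_below L2 (fst (circledast_state L1 L2 R) a) = {b. (a, b) \<in> R}"
proof -
  have row: "{b. (a, b) \<in> R} \<in> Cl L2 (coatoms L2 \<union> {\<top>\<^bsub>L2\<^esub>})" if "a \<noteq> \<bottom>\<^bsub>L1\<^esub>"
    using R assms that L2.bottom_closed by (auto simp: sigma_circledast_def chu_F_def)
  have state: "fst (circledast_state L1 L2 R) a =
      (if a = \<bottom>\<^bsub>L1\<^esub> then \<top>\<^bsub>L2\<^esub> else coatom_with_atoms L2 {b. (a, b) \<in> R})"
    using assms by (simp add: circledast_state_def)
  show "fst (circledast_state L1 L2 R) a \<in> states (chu_F L2)"
    using coatom_with_atoms(1)[OF row] by (simp add: state chu_F_def)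
  show "atoms_below L2 (fst (circledast_state L1 L2 R) a) = {b. (a, b) \<in> R}"
    if "a \<noteq> \<bottom>\<^bsub>L1\<^esub>"
    using coatom_with_atoms(2)[OF row[OF that]] that by (simp add: state)
qed

lemma circledast_state_snd:
  assumes "b \<in> pts (chu_F L2)"
  shows "snd (circledast_state L1 L2 R) b \<in> states (chu_F L1)"
    and "b \<noteq> \<bottom>\<^bsub>L2\<^esub> \<Longrightarrow> atoms_below L1 (snd (circledast_state L1 L2 R) b) = {a. (a, b) \<in> R}"
proof -
  have column: "{a. (a, b) \<in> R} \<in> Cl L1 (coatoms L1 \<union> {\<top>\<^bsub>L1\<^esub>})" if "b \<noteq> \<bottom>\<^bsub>L2\<^esub>"
    using R assms that L1.bottom_closed by (auto simp: sigma_circledast_def chu_F_def)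
  have state: "snd (circledast_state L1 L2 R) b =
      (if b = \<bottom>\<^bsub>L2\<^esub> then \<top>\<^bsub>L1\<^esub> else coatom_with_atoms L1 {a. (a, b) \<in> R})"
    using assms by (simp add: circledast_state_def)
  show "snd (circledast_state L1 L2 R) b \<in> states (chu_F L1)"
    using coatom_with_atoms(1)[OF column] by (simp add: state chu_F_def)
  show "atoms_below L1 (snd (circledast_state L1 L2 R) b) = {a. (a, b) \<in> R}"
    if "b \<noteq> \<bottom>\<^bsub>L2\<^esub>"
    using coatom_with_atoms(2)[OF column[OF that]] that by (simp add: state)
qed

lemma circledast_state_snd_atoms:
  assumes "a \<in> atoms L1" "b \<in> atoms L2"
  shows "a \<sqsubseteq>\<^bsub>L1\<^esub> snd (circledast_state L1 L2 R) b \<longleftrightarrow> (a, b) \<in> R"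
proof -
  have "b \<in> pts (chu_F L2)" "b \<noteq> \<bottom>\<^bsub>L2\<^esub>"
    using assms(2) by (auto simp: chu_F_def atoms_def)
  then show ?thesis
    using circledast_state_snd(2) assms(1) by (auto simp: atoms_below_def)
qed

lemma circledast_state_le_iff:
  assumes a: "a \<in> pts (chu_F L1)" and b: "b \<in> pts (chu_F L2)"
  shows "b \<sqsubseteq>\<^bsub>L2\<^esub> fst (circledast_state L1 L2 R) a \<longleftrightarrow> a \<sqsubseteq>\<^bsub>L1\<^esub> snd (circledast_state L1 L2 R) b"
proof -
  note fst_state = circledast_state_fst[OF a] and snd_state = circledast_state_snd[OF b]
  consider "a = \<bottom>\<^bsub>L1\<^esub>" | "b = \<bottom>\<^bsub>L2\<^esub>" | "a \<noteq> \<bottom>\<^bsub>L1\<^esub>" "b \<noteq> \<bottom>\<^bsub>L2\<^esub>"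
    by blast
  then show ?thesis
  proof cases
    case 1
    then show ?thesis
      using a b snd_state(1) chu_F_subset_carrier[OF L1] chu_F_subset_carrier[OF L2]
      by (auto simp: circledast_state_def)
  next
    case 2
    then show ?thesis
      using a b fst_state(1) chu_F_subset_carrier[OF L1] chu_F_subset_carrier[OF L2]
      by (auto simp: circledast_state_def)
  next
    case 3
    then have "a \<in> atoms L1" "b \<in> atoms L2"
      using a b by (auto simp: chu_F_def)
    then show ?thesis
      using fst_state(2)[OF 3(1)] circledast_state_snd_atoms by (auto simp: atoms_below_def)
  qed
qed

lemma circledast_state_in_states:
  "circledast_state L1 L2 R \<in> states (chu_tensor (chu_F L1) (chu_F L2))"
proof -
  have bottoms: "\<bottom>\<^bsub>L1\<^esub> \<in> pts (chu_F L1)" "\<bottom>\<^bsub>L2\<^esub> \<in> pts (chu_F L2)"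
    by (simp_all add: chu_F_def)
  have "fst (circledast_state L1 L2 R) \<in> pts (chu_F L1) \<rightarrow>\<^sub>E states (chu_F L2)"
    using circledast_state_fst(1) by (auto simp: PiE_iff circledast_state_def)
  moreover have "snd (circledast_state L1 L2 R) \<in> pts (chu_F L2) \<rightarrow>\<^sub>E states (chu_F L1)"
    using circledast_state_snd(1) by (auto simp: PiE_iff circledast_state_def)
  moreover have "fst (circledast_state L1 L2 R) \<bottom>\<^bsub>L1\<^esub> = \<top>\<^bsub>L2\<^esub>"
    "snd (circledast_state L1 L2 R) \<bottom>\<^bsub>L2\<^esub> = \<top>\<^bsub>L1\<^esub>"
    using bottoms by (simp_all add: circledast_state_def)
  ultimately have "chu_arrow (chu_F L1) (chu_perp (chu_F L2)) (circledast_state L1 L2 R)"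
    using circledast_state_le_iff
    by (simp add: chu_arrow_def chu_perp_def prod.case_eq_if) (simp add: chu_F_def)
  then show ?thesis
    by (simp add: chu_tensor_def)
qed

lemma chu_kernel_circledast_state:
  "chu_kernel (chu_tensor (chu_F L1) (chu_F L2)) (circledast_state L1 L2 R) = insert None (Some ` R)"
proof -
  have "R \<subseteq> atoms L1 \<times> atoms L2"
    using R by (auto simp: sigma_circledast_def)
  moreover have "\<bottom>\<^bsub>L1\<^esub> \<notin> atoms L1" "\<bottom>\<^bsub>L2\<^esub> \<notin> atoms L2"
    by (simp_all add: atoms_def)
  ultimately show ?thesis
    using circledast_state_snd_atoms
    by (auto simp: chu_kernel_def chu_tensor_def smash_def chu_F_def)
qed

end

theorem no_chu_iso_chu_F_tensor:
  assumes L0: "complete_lattice L0" "atomistic L0"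
    and L1: "complete_lattice L1" and L2: "complete_lattice L2"
    and R: "R \<in> sigma_circledast L1 L2" and S: "S \<in> sigma_circledast L1 L2" and "R \<subset> S"
  shows "\<not> chu_iso (chu_F L0) (chu_tensor (chu_F L1) (chu_F L2))"
proof
  let ?T = "chu_tensor (chu_F L1) (chu_F L2)"
  assume "chu_iso (chu_F L0) ?T"
  then have flat: "flat_kernels ?T"
    using chu_iso_flat_kernels flat_kernels_chu_F[OF L0] by blast
  have "chu_kernel ?T (circledast_state L1 L2 R) \<subset> chu_kernel ?T (circledast_state L1 L2 S)"
    using \<open>R \<subset> S\<close>
    by (auto simp: chu_kernel_circledast_state[OF L1 L2 R] chu_kernel_circledast_state[OF L1 L2 S])
  then have "chu_kernel ?T (circledast_state L1 L2 S) = pts ?T"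
    using flat circledast_state_in_states[OF L1 L2 R] circledast_state_in_states[OF L1 L2 S]
    unfolding flat_kernels_def by blast
  moreover obtain a b where "a \<in> atoms L1" "b \<in> atoms L2" "(a, b) \<notin> S"
    using S by (auto simp: sigma_circledast_def)
  then have "Some (a, b) \<in> pts ?T - insert None (Some ` S)"
    by (auto simp: chu_tensor_def smash_def chu_F_def atoms_def)
  ultimately show False
    using chu_kernel_circledast_state[OF L1 L2 S] by simp
qed

section \<open>The example on \<open>\<int>\<^sub>6\<close>\<close>

lemma six_cases: "(x :: 6) = 0 \<or> x = 1 \<or> x = 2 \<or> x = 3 \<or> x = 4 \<or> x = 5"
proof (cases x)
  case (of_int z)
  then have "z = 0 \<or> z = 1 \<or> z = 2 \<or> z = 3 \<or> z = 4 \<or> z = 5"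
    by auto
  then show ?thesis
    using of_int by auto
qed

lemma all_6: "(\<forall>x :: 6. P x) \<longleftrightarrow> P 0 \<and> P 1 \<and> P 2 \<and> P 3 \<and> P 4 \<and> P 5"
  by (metis six_cases)

lemma ex_6: "(\<exists>x :: 6. P x) \<longleftrightarrow> P 0 \<or> P 1 \<or> P 2 \<or> P 3 \<or> P 4 \<or> P 5"
  by (metis six_cases)

lemma set_6_eq_iff: "(A :: 6 set) = B \<longleftrightarrow> (\<forall>x. x \<in> A \<longleftrightarrow> x \<in> B)"
  by blast

lemma symp_orthZ6: "symp orthZ6"
  unfolding symp_def orthZ6_def primeZ6_def all_6 by simp

lemma irreflp_orthZ6: "irreflp orthZ6"
  unfolding irreflp_def orthZ6_def primeZ6_def all_6 by simp

lemma separating_orthZ6: "separating UNIV orthZ6"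
  unfolding separating_def orthZ6_def primeZ6_def ball_UNIV bex_UNIV all_6 ex_6 by simp

interpretation Z6: separating_orthogonality_space orthZ6
  by unfold_locales (rule symp_orthZ6 irreflp_orthZ6 separating_orthZ6)+

lemma perpZ6_eq_polar: "perpZ6 = polar orthZ6"
  by (simp add: fun_eq_iff perpZ6_def polar_def)

lemma LZ6_eq_polar_lattice: "LZ6 = polar_lattice orthZ6"
  by (simp add: LZ6_def polar_lattice_def perpZ6_eq_polar)

lemma polar_orthZ6_singleton: "polar orthZ6 {n} = primeZ6 n"
  by (auto simp: polar_def orthZ6_def)

lemma coatoms_LZ6: "coatoms LZ6 = range primeZ6"
  by (simp add: LZ6_eq_polar_lattice Z6.coatoms_polar_lattice polar_orthZ6_singleton)

lemma succ_in_polar_polar_orthZ6: "n + 1 \<in> polar orthZ6 (polar orthZ6 {n, n + 2})"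
proof -
  have "\<forall>n :: 6. n + 1 \<in> polar orthZ6 (polar orthZ6 {n, n + 2})"
    unfolding polar_def orthZ6_def primeZ6_def by (simp add: all_6)
  then show ?thesis ..
qed

lemma LZ6_irreducible: "\<not> decomposes_as LZ6 L1 L2"
proof
  assume "decomposes_as LZ6 L1 L2"
  then obtain Z where Z: "Z \<in> carrier (polar_lattice orthZ6)" "Z \<noteq> {}" "Z \<noteq> UNIV"
    and split: "\<And>p q. p \<in> Z \<Longrightarrow> q \<notin> Z \<Longrightarrow> polar orthZ6 (polar orthZ6 {p, q}) \<subseteq> {p, q}"
    unfolding LZ6_eq_polar_lattice by (rule Z6.decomposes_as_polar_lattice_splits_points) blast
  have succ: "n + 1 \<in> Z" if "n \<in> Z" for n
  proof -
    have "n + 1 \<noteq> n" "n + 1 \<noteq> n + 2"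
      using six_cases[of n] by auto
    then have "n + 2 \<in> Z"
      using split[OF that, of "n + 2"] succ_in_polar_polar_orthZ6[of n] by blast
    then have "polar orthZ6 (polar orthZ6 {n, n + 2}) \<subseteq> Z"
      using that by (intro polar_lattice_closed_subset[OF Z(1)]) simp
    then show ?thesis
      using succ_in_polar_polar_orthZ6 by blast
  qed
  obtain n where "n \<in> Z"
    using Z(2) by blast
  then have "n + 1 \<in> Z" "n + 2 \<in> Z" "n + 3 \<in> Z" "n + 4 \<in> Z" "n + 5 \<in> Z"
    using succ[of n] succ[of "n + 1"] succ[of "n + 2"] succ[of "n + 3"] succ[of "n + 4"]
    by (simp_all add: add.assoc)
  then have shifted: "n + k \<in> Z" for k
    using \<open>n \<in> Z\<close> six_cases[of k] by auto
  have "m \<in> Z" for m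
    using shifted[of "m - n"] by (simp add: algebra_simps)
  then show False
    using Z(3) by blast
qed

lemma primeZ6_values:
  "primeZ6 0 = {2, 3, 4}" "primeZ6 1 = {3, 4, 5}" "primeZ6 3 = {5, 0, 1}" "primeZ6 4 = {0, 1, 2}"
  unfolding set_6_eq_iff primeZ6_def all_6 by simp_all

lemma primeZ6_0_Un_3: "primeZ6 0 \<union> primeZ6 3 = UNIV"
  unfolding set_6_eq_iff primeZ6_values all_6 by simp

lemma primeZ6_4_1:
  "primeZ6 4 \<inter> primeZ6 1 = {}" "primeZ6 4 \<union> primeZ6 1 = UNIV"
  unfolding set_6_eq_iff primeZ6_values all_6 by simp_all

lemma RZ6_eq: "RZ6 = primeZ6 4 \<times> primeZ6 4 \<union> primeZ6 1 \<times> primeZ6 1"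
  by (simp add: RZ6_def primeZ6_values)

lemma RZ6_column: "{a. (a, b) \<in> RZ6} \<in> range primeZ6"
proof -
  have "{a. (a, b) \<in> RZ6} = (if b \<in> primeZ6 4 then primeZ6 4 else primeZ6 1)"
    using primeZ6_4_1 unfolding RZ6_eq by auto
  then show ?thesis
    by simp
qed

lemma RZ6_row: "{b. (a, b) \<in> RZ6} \<in> range primeZ6"
proof -
  have "{b. (a, b) \<in> RZ6} = (if a \<in> primeZ6 4 then primeZ6 4 else primeZ6 1)"
    using primeZ6_4_1 unfolding RZ6_eq by auto
  then show ?thesis
    by simp
qed

lemma SZ6_column: "{a. (a, b) \<in> SZ6} \<in> range primeZ6 \<union> {UNIV}"
proof -
  have "{a. (a, b) \<in> SZ6} = (if b \<in> primeZ6 1 then UNIV else primeZ6 4)"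
    by (auto simp: SZ6_def)
  then show ?thesis
    by simp
qed

lemma SZ6_row: "{b. (a, b) \<in> SZ6} \<in> range primeZ6 \<union> {UNIV}"
proof -
  have "{b. (a, b) \<in> SZ6} = (if a \<in> primeZ6 4 then UNIV else primeZ6 1)"
    by (auto simp: SZ6_def)
  then show ?thesis
    by simp
qed

lemma RZ6_psubset_SZ6: "RZ6 \<subset> SZ6"
proof
  show "RZ6 \<subseteq> SZ6"
    unfolding RZ6_eq SZ6_def by blast
  have "(0, 3) \<in> SZ6 - RZ6"
    unfolding RZ6_eq SZ6_def by (simp add: primeZ6_values)
  then show "RZ6 \<noteq> SZ6"
    by blast
qed

lemma SZ6_psubset_UNIV: "SZ6 \<subset> UNIV"
proof -
  have "(3, 0) \<notin> SZ6"
    by (simp add: SZ6_def primeZ6_values)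
  then show ?thesis
    by blast
qed

lemma atom_pairs_in_sigma_circledast:
  assumes "R \<noteq> UNIV"
    and "\<And>b. {a. (a, b) \<in> R} \<in> range primeZ6 \<union> {UNIV}"
    and "\<And>a. {b. (a, b) \<in> R} \<in> range primeZ6 \<union> {UNIV}"
  shows "atom_pairs R \<in> sigma_circledast LZ6 LZ6"
  unfolding atom_pairs_def LZ6_eq_polar_lattice
  using assms by (intro Z6.singleton_pairs_in_sigma_circledast) (simp_all add: polar_orthZ6_singleton)

lemma RZ6_in_sigma_circledast: "atom_pairs RZ6 \<in> sigma_circledast LZ6 LZ6"
proof (rule atom_pairs_in_sigma_circledast)
  show "RZ6 \<noteq> UNIV"
    using RZ6_psubset_SZ6 SZ6_psubset_UNIV by blast
qed (simp_all add: RZ6_column RZ6_row)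

lemma SZ6_in_sigma_circledast: "atom_pairs SZ6 \<in> sigma_circledast LZ6 LZ6"
  using SZ6_psubset_UNIV SZ6_column SZ6_row by (intro atom_pairs_in_sigma_circledast) blast+

lemma atom_pairs_strict_mono: "R \<subset> S \<Longrightarrow> atom_pairs R \<subset> atom_pairs S"
  unfolding atom_pairs_def by (rule image_strict_mono) (auto simp: inj_on_def)

theorem mainTheorem12:
  shows "(\<forall>n m. orthZ6 n m \<longrightarrow> orthZ6 m n) \<and> (\<forall>n. \<not> orthZ6 n n) \<and>
    separating UNIV orthZ6 \<and>
    complete_lattice LZ6 \<and> atomistic LZ6 \<and> orthocomplemented LZ6 \<and>
    (\<forall>(L1 :: 'b gorder) (L2 :: 'c gorder). \<not> decomposes_as LZ6 L1 L2) \<and>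
    simple_closure_space UNIV (\<lambda>A. perpZ6 (perpZ6 A)) \<and>
    (\<exists>x\<in>coatoms LZ6. \<exists>y\<in>coatoms LZ6.
        atoms_below LZ6 x \<union> atoms_below LZ6 y = atoms LZ6) \<and>
    primeZ6 0 \<in> coatoms LZ6 \<and> primeZ6 3 \<in> coatoms LZ6 \<and> primeZ6 0 \<union> primeZ6 3 = UNIV \<and>
    atom_pairs RZ6 \<in> sigma_circledast LZ6 LZ6 \<and> atom_pairs SZ6 \<in> sigma_circledast LZ6 LZ6 \<and>
    RZ6 \<subset> SZ6 \<and> SZ6 \<subset> UNIV \<and>
    \<not> (\<exists>L0 :: 'd gorder. complete_lattice L0 \<and> atomistic L0 \<and> coatomistic L0 \<and>
          chu_iso (chu_F L0) (chu_tensor (chu_F LZ6) (chu_F LZ6)))"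
proof -
  have coatoms: "primeZ6 0 \<in> coatoms LZ6" "primeZ6 3 \<in> coatoms LZ6"
    by (simp_all add: coatoms_LZ6)
  have "atoms_below LZ6 (primeZ6 0) \<union> atoms_below LZ6 (primeZ6 3) = atoms LZ6"
    unfolding LZ6_eq_polar_lattice Z6.atoms_below_polar_lattice Z6.atoms_polar_lattice
      image_Un[symmetric] primeZ6_0_Un_3 ..
  with coatoms have covering_coatoms:
    "\<exists>x\<in>coatoms LZ6. \<exists>y\<in>coatoms LZ6. atoms_below LZ6 x \<union> atoms_below LZ6 y = atoms LZ6"
    by blast
  have lattice: "complete_lattice LZ6" "atomistic LZ6" "orthocomplemented LZ6"
    unfolding LZ6_eq_polar_lattice
    by (rule Z6.complete_lattice_polar_lattice Z6.atomistic_polar_lattice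
        Z6.orthocomplemented_polar_lattice)+
  have no_iso: "\<not> chu_iso (chu_F L0) (chu_tensor (chu_F LZ6) (chu_F LZ6))"
    if "complete_lattice L0" "atomistic L0" for L0 :: "'d gorder"
    using no_chu_iso_chu_F_tensor[OF that lattice(1) lattice(1) RZ6_in_sigma_circledast
        SZ6_in_sigma_circledast atom_pairs_strict_mono[OF RZ6_psubset_SZ6]] .
  show ?thesis
    using symp_orthZ6 irreflp_orthZ6 separating_orthZ6 lattice LZ6_irreducible
      Z6.simple_closure_space_polar_polar covering_coatoms coatoms primeZ6_0_Un_3
      RZ6_in_sigma_circledast SZ6_in_sigma_circledast RZ6_psubset_SZ6 SZ6_psubset_UNIV no_iso
    by (auto simp: perpZ6_eq_polar irreflp_def dest: sympD)
qed

end
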